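(* Under the assumptions of the generalization setting below, for any $\epsilon>0$ and $\delta\in(0,1)$, if $$L\ge\frac{9n^2}{2\epsilon^2}\Big(\log\frac4\delta+\max\Big\{\log\mathcal N_{\infty,1}\big(\mathcal P,\tfrac\epsilon3\big),\log\mathcal N_{\infty,1}\big(\mathcal U,\tfrac\epsilon6\big)\Big\}\Big),$$ then with probability at least $1-\delta$, simultaneously for all $\omega\in\Omega$, $\big|\mathbb E[\sum_{i=1}^np_i^\omega(v,x,y)]-\frac1L\sum_{l=1}^L\sum_{i=1}^np_i^\omega(v^{(l)},x^{(l)},y^{(l)})\big|\le\epsilon$ and $\big|\mathbb E[\sum_{i=1}^nreg_i^\omega(v,x,y)]-\sum_{i=1}^n\widehat{reg}_i(\omega)\big|\le\epsilon$.
   Context: Generalization setting: $n$ bidders, $m$ items, bidder contexts $x\in\mathcal X^n$, item contexts $y\in\mathcal Y^m$, valuation/bid matrices $v\in\mathcal V^{n\times m}$, $\mathcal V\subseteq\mathbb R_{\ge0}$, with every bidder's valuation satisfying $\sum_{j\in S}v_{ij}\le1$ for all $S\subseteq[m]$; $(v_i',v_{-i})$ is $v$ with row $i$ replaced by $v_i'$. $\{(g^\omega,p^\omega):\omega\in\Omega\}$ is a family of mechanisms with $g^\omega_{ij}\in[0,1]$, $\sum_ig^\omega_{ij}\le1$, $p^\omega_i\ge0$, $p^\omega_i(b,x,y)\le\sum_jg^\omega_{ij}(b,x,y)b_{ij}$. Utility $u^\omega_i(v_i,b,x,y)=\sum_jg^\omega_{ij}(b,x,y)v_{ij}-p^\omega_i(b,x,y)$;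 ex-post regret $reg^\omega_i(v,x,y)=\max_{b_i'\in\mathcal V^m}u^\omega_i(v_i,(b_i',v_{-i}),x,y)-u^\omega_i(v_i,v,x,y)$; samples $(v^{(l)},x^{(l)},y^{(l)})$, $l=1,\dots,L$, i.i.d. from the law of $(v,x,y)$; $\widehat{reg}_i(\omega)=\frac1L\sum_l reg_i^\omega(v^{(l)},x^{(l)},y^{(l)})$. $\mathcal U=\{u^\omega\}$, $\mathcal P=\{p^\omega\}$; $l_{\infty,1}(p,p')=\sup_{(v,x,y)}\sum_i|p_i-p'_i|$, $l_{\infty,1}(u,u')=\sup_{(v,v',x,y)}\sum_i|u_i(v_i,(v_i',v_{-i}),x,y)-u'_i(v_i,(v_i',v_{-i}),x,y)|$; $\mathcal N_{\infty,1}(\mathcal F,r)$ is the minimum number of open $l_{\infty,1}$-balls of radius $r$ centered in $\mathcal F$ covering $\mathcal F$ (assumed finite). Maxima attained, functions measurable. *)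

theory Defs
  imports "HOL-Probability.Probability"
begin

text \<open>Bid / valuation matrices are functions nat => nat => real, indexed by
bidders i < n and items j < m; entries outside the index range are fixed to 0.\<close>

definition bid_profiles :: "nat \<Rightarrow> nat \<Rightarrow> real set \<Rightarrow> (nat \<Rightarrow> nat \<Rightarrow> real) set" where
  "bid_profiles n m Vs = {b. (\<forall>i<n. \<forall>j<m. b i j \<in> Vs) \<and> (\<forall>i j. \<not> (i < n \<and> j < m) \<longrightarrow> b i j = 0)}"

definition bid_rows :: "nat \<Rightarrow> real set \<Rightarrow> (nat \<Rightarrow> real) set" where
  "bid_rows m Vs = {r. (\<forall>j<m. r j \<in> Vs) \<and> (\<forall>j\<ge>m. r j = 0)}"

definition valuation_profiles :: "nat \<Rightarrow> nat \<Rightarrow> real set \<Rightarrow> (nat \<Rightarrow> nat \<Rightarrow> real) set" where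
  "valuation_profiles n m Vs = {v \<in> bid_profiles n m Vs. \<forall>i<n. \<forall>S\<subseteq>{..<m}. (\<Sum>j\<in>S. v i j) \<le> 1}"

definition ctx_vectors :: "nat \<Rightarrow> 'c set \<Rightarrow> (nat \<Rightarrow> 'c) set" where
  "ctx_vectors k Cs = {c. (\<forall>i<k. c i \<in> Cs) \<and> (\<forall>i\<ge>k. c i = undefined)}"

definition inst_dom :: "nat \<Rightarrow> nat \<Rightarrow> real set \<Rightarrow> 'a set \<Rightarrow> 'b set
    \<Rightarrow> ((nat \<Rightarrow> nat \<Rightarrow> real) \<times> (nat \<Rightarrow> 'a) \<times> (nat \<Rightarrow> 'b)) set" where
  "inst_dom n m Vs Xs Ys = valuation_profiles n m Vs \<times> ctx_vectors n Xs \<times> ctx_vectors m Ys"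

type_synonym ('a,'b) alloc = "(nat \<Rightarrow> nat \<Rightarrow> real) \<Rightarrow> (nat \<Rightarrow> 'a) \<Rightarrow> (nat \<Rightarrow> 'b) \<Rightarrow> nat \<Rightarrow> nat \<Rightarrow> real"
type_synonym ('a,'b) pay = "(nat \<Rightarrow> nat \<Rightarrow> real) \<Rightarrow> (nat \<Rightarrow> 'a) \<Rightarrow> (nat \<Rightarrow> 'b) \<Rightarrow> nat \<Rightarrow> real"
type_synonym ('a,'b) util = "nat \<Rightarrow> (nat \<Rightarrow> real) \<Rightarrow> (nat \<Rightarrow> nat \<Rightarrow> real) \<Rightarrow> (nat \<Rightarrow> 'a) \<Rightarrow> (nat \<Rightarrow> 'b) \<Rightarrow> real"

definition feasible_mech :: "nat \<Rightarrow> nat \<Rightarrow> real set \<Rightarrow> 'a set \<Rightarrow> 'b set \<Rightarrow> ('a,'b) alloc \<Rightarrow> ('a,'b) pay \<Rightarrow> bool" where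
  "feasible_mech n m Vs Xs Ys g p \<longleftrightarrow>
     (\<forall>b\<in>bid_profiles n m Vs. \<forall>x\<in>ctx_vectors n Xs. \<forall>y\<in>ctx_vectors m Ys.
        (\<forall>i<n. \<forall>j<m. 0 \<le> g b x y i j \<and> g b x y i j \<le> 1) \<and>
        (\<forall>j<m. (\<Sum>i<n. g b x y i j) \<le> 1) \<and>
        (\<forall>i<n. 0 \<le> p b x y i \<and> p b x y i \<le> (\<Sum>j<m. g b x y i j * b i j)))"

definition utility :: "nat \<Rightarrow> ('a,'b) alloc \<Rightarrow> ('a,'b) pay \<Rightarrow> ('a,'b) util" where
  "utility m g p i vi b x y = (\<Sum>j<m. g b x y i j * vi j) - p b x y i"

text \<open>Ex-post regret (maximum over deviating bids b_i' in V^m, written as a supremum;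
     attainment is a separate hypothesis of the theorem).\<close>
definition regret :: "nat \<Rightarrow> real set \<Rightarrow> ('a,'b) alloc \<Rightarrow> ('a,'b) pay \<Rightarrow> nat
     \<Rightarrow> (nat \<Rightarrow> nat \<Rightarrow> real) \<Rightarrow> (nat \<Rightarrow> 'a) \<Rightarrow> (nat \<Rightarrow> 'b) \<Rightarrow> real" where
  "regret m Vs g p i v x y =
     (SUP b'\<in>bid_rows m Vs. utility m g p i (v i) (v(i := b')) x y) - utility m g p i (v i) v x y"

text \<open>l_{infty,1} distances (as extended reals, since the supremum may be infinite).\<close>
definition linf1_pay :: "nat \<Rightarrow> nat \<Rightarrow> real set \<Rightarrow> 'a set \<Rightarrow> 'b set \<Rightarrow> ('a,'b) pay \<Rightarrow> ('a,'b) pay \<Rightarrow> ereal" where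
  "linf1_pay n m Vs Xs Ys p p' =
     (SUP z\<in>inst_dom n m Vs Xs Ys. ereal (\<Sum>i<n. \<bar>p (fst z) (fst (snd z)) (snd (snd z)) i
                                             - p' (fst z) (fst (snd z)) (snd (snd z)) i\<bar>))"

definition linf1_util :: "nat \<Rightarrow> nat \<Rightarrow> real set \<Rightarrow> 'a set \<Rightarrow> 'b set \<Rightarrow> ('a,'b) util \<Rightarrow> ('a,'b) util \<Rightarrow> ereal" where
  "linf1_util n m Vs Xs Ys u u' =
     (SUP z\<in>inst_dom n m Vs Xs Ys \<times> bid_profiles n m Vs.
        (case z of ((v, x, y), v') \<Rightarrow>
          ereal (\<Sum>i<n. \<bar>u i (v i) (v(i := v' i)) x y - u' i (v i) (v(i := v' i)) x y\<bar>)))"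

definition covering_number :: "('f \<Rightarrow> 'f \<Rightarrow> ereal) \<Rightarrow> 'f set \<Rightarrow> real \<Rightarrow> nat" where
  "covering_number d F r =
     (LEAST k. \<exists>C. C \<subseteq> F \<and> finite C \<and> card C = k \<and> (\<forall>f\<in>F. \<exists>c\<in>C. d f c < ereal r))"

definition finitely_coverable :: "('f \<Rightarrow> 'f \<Rightarrow> ereal) \<Rightarrow> 'f set \<Rightarrow> real \<Rightarrow> bool" where
  "finitely_coverable d F r \<longleftrightarrow> (\<exists>C. C \<subseteq> F \<and> finite C \<and> (\<forall>f\<in>F. \<exists>c\<in>C. d f c < ereal r))"

end

theory Submission
  imports Defs
begin

text \<open>Both bounds are uniform laws of large numbers over the mechanism class. By feasibility and
the unit bound on valuations, the total payment and the total regret of a mechanism take values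
in [0, n]. The total payment is 1-Lipschitz in the l_{\<infinity>,1} distance of payment rules, and the
total regret is 2-Lipschitz in the l_{\<infinity>,1} distance of utilities, because a maximum moves by
at most the uniform distance of the maximised functions. Hence a finite net of the class, of size
the covering number, approximates every mechanism up to 2\<epsilon>/3 both in expectation and on the
sample, and Hoeffding's inequality with a union bound over the net makes all net members
\<epsilon>/3-accurate at once, outside an event of probability \<delta>/2 for each of the two families.\<close>

lemma indep_vars_PiM_components:
  assumes M: "\<And>i. i \<in> I \<Longrightarrow> prob_space (M i)" and I: "I \<noteq> {}"
  shows "prob_space.indep_vars (PiM I M) M (\<lambda>i x. x i) I"
proof -
  interpret Q: prob_space "PiM I M" by (rule prob_space_PiM) (rule M)
  show ?thesis
  proof (subst Q.indep_vars_iff_distr_eq_PiM'[OF I])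
    have "distr (PiM I M) (PiM I M) (\<lambda>x. \<lambda>i\<in>I. x i) = distr (PiM I M) (PiM I M) (\<lambda>x. x)"
      by (rule distr_cong) (auto simp: space_PiM PiE_def extensional_restrict)
    also have "\<dots> = PiM I (\<lambda>i. distr (PiM I M) (M i) (\<lambda>x. x i))"
      by (auto intro!: PiM_cong simp: distr_PiM_component M)
    finally show "distr (PiM I M) (PiM I M) (\<lambda>x. \<lambda>i\<in>I. x i) = PiM I (\<lambda>i. distr (PiM I M) (M i) (\<lambda>x. x i))" .
  qed simp
qed

lemma AE_PiM_component:
  assumes M: "\<And>i. i \<in> I \<Longrightarrow> prob_space (M i)" and i: "i \<in> I" and AE: "AE z in M i. P z"
  shows "AE x in PiM I M. P (x i)"
proof (rule AE_distrD[where M'="M i"])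
  show "AE z in distr (PiM I M) (M i) (\<lambda>x. x i). P z"
    using AE by (subst distr_PiM_component[OF M i]) auto
qed (use i in simp)

lemma Hoeffding_sample_mean_PiM:
  fixes D :: "'z measure" and f :: "'z \<Rightarrow> real"
  assumes D: "prob_space D" and f[measurable]: "f \<in> borel_measurable D"
    and f_bound: "AE z in D. f z \<in> {a..b}" and ab: "a < b" and L: "L > 0" and t: "t \<ge> 0"
  shows "measure (PiM {..<L} (\<lambda>_. D)) {S \<in> space (PiM {..<L} (\<lambda>_. D)).
            t \<le> \<bar>(\<Sum>l<L. f (S l)) / real L - (\<integral>z. f z \<partial>D)\<bar>} \<le> 2 * exp (-2 * real L * t\<^sup>2 / (b - a)\<^sup>2)"
proof -
  let ?Q = "PiM {..<L} (\<lambda>_. D)"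
  interpret Q: prob_space ?Q by (rule prob_space_PiM) (rule D)
  have L0: "0 \<in> {..<L}" using L by simp
  have distr_S: "distr ?Q D (\<lambda>S. S l) = D" if "l \<in> {..<L}" for l
    using distr_PiM_component[of "{..<L}" "\<lambda>_. D" l] D that by simp
  have distr_f: "distr ?Q borel (\<lambda>S. f (S l)) = distr D borel f" if "l \<in> {..<L}" for l
    using that by (subst distr_distr[symmetric, of f D borel _ ?Q, simplified comp_def])
      (simp_all add: distr_S)
  have mean: "Q.expectation (\<lambda>S. f (S 0)) = (\<integral>z. f z \<partial>D)"
    using integral_distr[of "\<lambda>S. S 0" ?Q D f] L0 by (simp add: distr_S)
  interpret Hoeffding_ineq_iid ?Q "{..<L}" "\<lambda>l S. f (S l)" "\<lambda>S. f (S 0)" a b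
    "Q.expectation (\<lambda>S. f (S 0))"
  proof unfold_locales
    show "Q.indep_vars (\<lambda>_. borel) (\<lambda>l S. f (S l)) {..<L}"
      using Q.indep_vars_compose2[OF indep_vars_PiM_components[of "{..<L}" "\<lambda>_. D"],
          of "\<lambda>_. f" "\<lambda>_. borel"] D L by auto
    show "AE S in ?Q. f (S 0) \<in> {a..b}"
      by (rule AE_PiM_component[OF D L0 f_bound])
  qed (use L0 distr_f in auto)
  show ?thesis
    using Hoeffding_ineq_abs_ge'[OF t ab] L0 by (auto simp: mean)
qed

lemma (in prob_space) abs_integral_diff_le:
  fixes f g :: "'a \<Rightarrow> real"
  assumes f: "integrable M f" and g: "integrable M g" and fg: "AE x in M. \<bar>f x - g x\<bar> \<le> r"
  shows "\<bar>(\<integral>x. f x \<partial>M) - (\<integral>x. g x \<partial>M)\<bar> \<le> r"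
proof -
  have "\<bar>(\<integral>x. f x \<partial>M) - (\<integral>x. g x \<partial>M)\<bar> = \<bar>\<integral>x. f x - g x \<partial>M\<bar>"
    using f g by simp
  also have "\<dots> \<le> (\<integral>x. \<bar>f x - g x\<bar> \<partial>M)"
    using integral_norm_bound[of M "\<lambda>x. f x - g x"] by simp
  also have "\<dots> \<le> (\<integral>x. r \<partial>M)"
    using f g fg by (intro integral_mono_AE) auto
  finally show ?thesis by (simp add: prob_space)
qed

lemma abs_mean_diff_le:
  fixes a b :: "nat \<Rightarrow> real"
  assumes L: "L > 0" and ab: "\<And>l. l < L \<Longrightarrow> \<bar>a l - b l\<bar> \<le> r"
  shows "\<bar>(\<Sum>l<L. a l) / real L - (\<Sum>l<L. b l) / real L\<bar> \<le> r"
proof -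
  have "\<bar>(\<Sum>l<L. a l) - (\<Sum>l<L. b l)\<bar> \<le> (\<Sum>l<L. \<bar>a l - b l\<bar>)"
    by (metis sum_abs sum_subtractf)
  also have "\<dots> \<le> real L * r"
    using sum_bounded_above[of "{..<L}" "\<lambda>l. \<bar>a l - b l\<bar>" r] ab by simp
  finally show ?thesis
    using L by (simp add: diff_divide_distrib[symmetric] pos_divide_le_eq mult.commute)
qed

lemma finite_net_from_covering:
  assumes "finitely_coverable d (f ` Om) r"
  obtains K where "K \<subseteq> Om" "finite K" "card K \<le> covering_number d (f ` Om) r"
    "\<And>\<omega>. \<omega> \<in> Om \<Longrightarrow> \<exists>k\<in>K. d (f \<omega>) (f k) < ereal r"
proof -
  have "\<exists>k C. C \<subseteq> f ` Om \<and> finite C \<and> card C = k \<and> (\<forall>g\<in>f ` Om. \<exists>c\<in>C. d g c < ereal r)"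
    using assms unfolding finitely_coverable_def by blast
  then have "\<exists>C. C \<subseteq> f ` Om \<and> finite C \<and> card C = covering_number d (f ` Om) r \<and>
      (\<forall>g\<in>f ` Om. \<exists>c\<in>C. d g c < ereal r)"
    unfolding covering_number_def by (rule LeastI_ex)
  then obtain C where C: "C \<subseteq> f ` Om" "finite C" "card C = covering_number d (f ` Om) r"
      "\<forall>g\<in>f ` Om. \<exists>c\<in>C. d g c < ereal r"
    by blast
  show ?thesis
  proof (rule that[of "inv_into Om f ` C"])
    show "inv_into Om f ` C \<subseteq> Om" using C(1) by (auto intro: inv_into_into)
    show "card (inv_into Om f ` C) \<le> covering_number d (f ` Om) r"
      using card_image_le[OF C(2)] C(3) by simp
    show "\<exists>k\<in>inv_into Om f ` C. d (f \<omega>) (f k) < ereal r" if \<omega>: "\<omega> \<in> Om" for \<omega>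
    proof -
      obtain c where c: "c \<in> C" "d (f \<omega>) c < ereal r" using C(4) \<omega> by blast
      moreover have "f (inv_into Om f c) = c" using C(1) c(1) by (intro f_inv_into_f) blast
      ultimately show ?thesis by (intro bexI[of _ "inv_into Om f c"]) simp_all
    qed
  qed (use C(2) in simp)
qed

lemma ln_of_nat_nonneg: "0 \<le> ln (real k)"
  by (cases "k = 0") (simp_all add: ln_ge_zero)

lemma union_Hoeffding_bound_le:
  fixes k N :: nat and L c t \<delta> M :: real
  assumes k: "1 \<le> k" "k \<le> N" and M: "ln (real N) \<le> M"
    and c: "c > 0" and t: "t > 0" and \<delta>: "\<delta> > 0"
    and L: "L \<ge> c\<^sup>2 / (2 * t\<^sup>2) * (ln (4 / \<delta>) + M)"
  shows "real k * (2 * exp (-2 * L * t\<^sup>2 / c\<^sup>2)) \<le> \<delta> / 2"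
proof -
  have N: "real N \<ge> 1" using k by simp
  have "ln (4 * real N / \<delta>) = ln (4 / \<delta>) + ln (real N)"
    using \<delta> N by (simp add: ln_mult ln_div)
  also have "\<dots> \<le> ln (4 / \<delta>) + M" using M by simp
  also have "\<dots> \<le> 2 * L * t\<^sup>2 / c\<^sup>2"
    using L c t by (simp add: field_simps)
  finally have "exp (-2 * L * t\<^sup>2 / c\<^sup>2) \<le> exp (- ln (4 * real N / \<delta>))"
    by simp
  also have "\<dots> = \<delta> / (4 * real N)" using \<delta> N by (simp add: exp_minus)
  finally have "real k * (2 * exp (-2 * L * t\<^sup>2 / c\<^sup>2)) \<le> real N * (2 * (\<delta> / (4 * real N)))"
    using k by (intro mult_mono) auto
  also have "\<dots> = \<delta> / 2" using N by simp
  finally show ?thesis .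
qed

lemma sample_means_uniformly_close_via_net:
  fixes D :: "'z measure" and h :: "'w \<Rightarrow> 'z \<Rightarrow> real"
  assumes D: "prob_space D" and Dom: "AE z in D. z \<in> Dom"
    and h_meas: "\<And>\<omega>. \<omega> \<in> Om \<Longrightarrow> h \<omega> \<in> borel_measurable D"
    and h_bound: "\<And>\<omega> z. \<omega> \<in> Om \<Longrightarrow> z \<in> Dom \<Longrightarrow> h \<omega> z \<in> {0..c}"
    and K: "finite K" "K \<subseteq> Om"
    and net: "\<And>\<omega>. \<omega> \<in> Om \<Longrightarrow> \<exists>k\<in>K. \<forall>z\<in>Dom. \<bar>h \<omega> z - h k z\<bar> \<le> r"
    and c: "c > 0" and L: "L > 0" and t: "t \<ge> 0"
  shows "\<exists>B \<in> sets (PiM {..<L} (\<lambda>_. D)).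
           measure (PiM {..<L} (\<lambda>_. D)) B \<le> real (card K) * (2 * exp (-2 * real L * t\<^sup>2 / c\<^sup>2)) \<and>
           (\<forall>S \<in> space (PiM {..<L} (\<lambda>_. D)) - B. \<forall>\<omega>\<in>Om.
              \<bar>(\<integral>z. h \<omega> z \<partial>D) - (\<Sum>l<L. h \<omega> (S l)) / real L\<bar> \<le> 2 * r + t)"
proof -
  let ?Q = "PiM {..<L} (\<lambda>_. D)"
  interpret D: prob_space D by (rule D)
  interpret Q: prob_space ?Q by (rule prob_space_PiM) (rule D)
  have h_AE_bound: "AE z in D. h \<omega> z \<in> {0..c}" if "\<omega> \<in> Om" for \<omega>
    using Dom by eventually_elim (use h_bound that in blast)
  have h_int: "integrable D (h \<omega>)" if "\<omega> \<in> Om" for \<omega>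
  proof (rule D.integrable_const_bound[where B=c])
    show "AE z in D. norm (h \<omega> z) \<le> c"
      using h_AE_bound[OF that] by eventually_elim auto
  qed (rule h_meas[OF that])
  define B where "B k = {S \<in> space ?Q. t \<le> \<bar>(\<Sum>l<L. h k (S l)) / real L - (\<integral>z. h k z \<partial>D)\<bar>}" for k
  have B_sets: "B k \<in> sets ?Q" if "k \<in> K" for k
  proof -
    have [measurable]: "h k \<in> borel_measurable D" using that K(2) by (intro h_meas) auto
    show ?thesis unfolding B_def by measurable
  qed
  have B_prob: "measure ?Q (B k) \<le> 2 * exp (-2 * real L * t\<^sup>2 / c\<^sup>2)" if "k \<in> K" for k
    using Hoeffding_sample_mean_PiM[OF D h_meas h_AE_bound c L t] that K(2) by (auto simp: B_def)
  have "AE S in ?Q. \<forall>l\<in>{..<L}. S l \<in> Dom"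
    by (intro AE_finite_allI AE_PiM_component[OF D _ Dom]) auto
  then obtain N where N: "{S \<in> space ?Q. \<not> (\<forall>l\<in>{..<L}. S l \<in> Dom)} \<subseteq> N"
      "emeasure ?Q N = 0" "N \<in> sets ?Q"
    by (rule AE_E)
  define Bad where "Bad = (\<Union>k\<in>K. B k) \<union> N"
  have Bad_sets: "Bad \<in> sets ?Q"
    unfolding Bad_def using B_sets K(1) N(3) by (intro sets.Un sets.finite_UN) auto
  have "measure ?Q Bad \<le> measure ?Q (\<Union>k\<in>K. B k) + measure ?Q N"
    unfolding Bad_def using B_sets K(1) N(3) by (intro measure_Un_le) auto
  also have "\<dots> \<le> (\<Sum>k\<in>K. measure ?Q (B k))"
    using measure_UNION_le[OF K(1) B_sets] N(2) by (simp add: measure_def)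
  also have "\<dots> \<le> real (card K) * (2 * exp (-2 * real L * t\<^sup>2 / c\<^sup>2))"
    using sum_bounded_above[of K "\<lambda>k. measure ?Q (B k)"] B_prob by simp
  finally have Bad_prob: "measure ?Q Bad \<le> real (card K) * (2 * exp (-2 * real L * t\<^sup>2 / c\<^sup>2))" .
  show ?thesis
  proof (intro bexI[OF _ Bad_sets] conjI Bad_prob ballI)
    fix S \<omega> assume S: "S \<in> space ?Q - Bad" and \<omega>: "\<omega> \<in> Om"
    obtain k where k: "k \<in> K" and close: "\<forall>z\<in>Dom. \<bar>h \<omega> z - h k z\<bar> \<le> r"
      using net[OF \<omega>] by blast
    have S_Dom: "S l \<in> Dom" if "l < L" for l
      using S N(1) that by (auto simp: Bad_def)
    have "\<bar>(\<integral>z. h \<omega> z \<partial>D) - (\<integral>z. h k z \<partial>D)\<bar> \<le> r"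
      using Dom close k K(2) \<omega> by (intro D.abs_integral_diff_le h_int) (auto elim!: eventually_mono)
    moreover have "\<bar>(\<Sum>l<L. h \<omega> (S l)) / real L - (\<Sum>l<L. h k (S l)) / real L\<bar> \<le> r"
      using close S_Dom by (intro abs_mean_diff_le L) auto
    moreover have "\<bar>(\<Sum>l<L. h k (S l)) / real L - (\<integral>z. h k z \<partial>D)\<bar> < t"
      using S k by (auto simp: Bad_def B_def)
    ultimately show "\<bar>(\<integral>z. h \<omega> z \<partial>D) - (\<Sum>l<L. h \<omega> (S l)) / real L\<bar> \<le> 2 * r + t"
      by linarith
  qed
qed

lemma sample_means_uniformly_close_via_covering:
  fixes D :: "'z measure" and h :: "'w \<Rightarrow> 'z \<Rightarrow> real" and f :: "'w \<Rightarrow> 'f"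
  assumes D: "prob_space D" and Dom: "AE z in D. z \<in> Dom"
    and h_meas: "\<And>\<omega>. \<omega> \<in> Om \<Longrightarrow> h \<omega> \<in> borel_measurable D"
    and h_bound: "\<And>\<omega> z. \<omega> \<in> Om \<Longrightarrow> z \<in> Dom \<Longrightarrow> h \<omega> z \<in> {0..c}"
    and cov: "finitely_coverable d (f ` Om) \<rho>"
    and h_lipschitz: "\<And>\<omega> \<omega>' z. \<omega> \<in> Om \<Longrightarrow> \<omega>' \<in> Om \<Longrightarrow> d (f \<omega>) (f \<omega>') < ereal \<rho> \<Longrightarrow> z \<in> Dom \<Longrightarrow>
        \<bar>h \<omega> z - h \<omega>' z\<bar> \<le> r"
    and Om: "Om \<noteq> {}" and c: "c > 0" and t: "t > 0" and \<delta>: "0 < \<delta>" "\<delta> < 1"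
    and M: "ln (real (covering_number d (f ` Om) \<rho>)) \<le> M"
    and L_bound: "real L \<ge> c\<^sup>2 / (2 * t\<^sup>2) * (ln (4 / \<delta>) + M)"
  shows "\<exists>B \<in> sets (PiM {..<L} (\<lambda>_. D)). measure (PiM {..<L} (\<lambda>_. D)) B \<le> \<delta> / 2 \<and>
           (\<forall>S \<in> space (PiM {..<L} (\<lambda>_. D)) - B. \<forall>\<omega>\<in>Om.
              \<bar>(\<integral>z. h \<omega> z \<partial>D) - (\<Sum>l<L. h \<omega> (S l)) / real L\<bar> \<le> 2 * r + t)"
proof -
  obtain K where K: "K \<subseteq> Om" "finite K" "card K \<le> covering_number d (f ` Om) \<rho>"
      and K_net: "\<And>\<omega>. \<omega> \<in> Om \<Longrightarrow> \<exists>k\<in>K. d (f \<omega>) (f k) < ereal \<rho>"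
    by (rule finite_net_from_covering[OF cov]) (rule that)
  obtain \<omega>\<^sub>0 where "\<omega>\<^sub>0 \<in> Om" using Om by blast
  then have "K \<noteq> {}" using K_net by blast
  then have card_K: "1 \<le> card K" using K(2) by (simp add: Suc_le_eq card_gt_0_iff)
  have "0 < ln (4 / \<delta>)" using \<delta> by simp
  moreover have "0 \<le> M" using M ln_of_nat_nonneg order_trans by blast
  ultimately have "0 < c\<^sup>2 / (2 * t\<^sup>2) * (ln (4 / \<delta>) + M)"
    using c t by (intro mult_pos_pos add_pos_nonneg) simp_all
  with L_bound have L: "L > 0" by linarith
  have net: "\<exists>k\<in>K. \<forall>z\<in>Dom. \<bar>h \<omega> z - h k z\<bar> \<le> r" if \<omega>: "\<omega> \<in> Om" for \<omega>
  proof -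
    obtain k where k: "k \<in> K" "d (f \<omega>) (f k) < ereal \<rho>" using K_net[OF \<omega>] by blast
    have "\<forall>z\<in>Dom. \<bar>h \<omega> z - h k z\<bar> \<le> r"
      using h_lipschitz[OF \<omega> _ k(2)] k(1) K(1) by blast
    with k(1) show ?thesis by blast
  qed
  have "\<exists>B \<in> sets (PiM {..<L} (\<lambda>_. D)).
      measure (PiM {..<L} (\<lambda>_. D)) B \<le> real (card K) * (2 * exp (-2 * real L * t\<^sup>2 / c\<^sup>2)) \<and>
      (\<forall>S \<in> space (PiM {..<L} (\<lambda>_. D)) - B. \<forall>\<omega>\<in>Om.
         \<bar>(\<integral>z. h \<omega> z \<partial>D) - (\<Sum>l<L. h \<omega> (S l)) / real L\<bar> \<le> 2 * r + t)"
    using t by (intro sample_means_uniformly_close_via_net[where Dom=Dom] D Dom h_meas h_bound K net c L) simp_all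
  then obtain B where B: "B \<in> sets (PiM {..<L} (\<lambda>_. D))"
      "measure (PiM {..<L} (\<lambda>_. D)) B \<le> real (card K) * (2 * exp (-2 * real L * t\<^sup>2 / c\<^sup>2))"
      "\<forall>S \<in> space (PiM {..<L} (\<lambda>_. D)) - B. \<forall>\<omega>\<in>Om.
         \<bar>(\<integral>z. h \<omega> z \<partial>D) - (\<Sum>l<L. h \<omega> (S l)) / real L\<bar> \<le> 2 * r + t"
    by blast
  have "real (card K) * (2 * exp (-2 * real L * t\<^sup>2 / c\<^sup>2)) \<le> \<delta> / 2"
    by (rule union_Hoeffding_bound_le[OF card_K K(3) M c t \<delta>(1) L_bound])
  with B(2) have "measure (PiM {..<L} (\<lambda>_. D)) B \<le> \<delta> / 2" by linarith
  with B(1,3) show ?thesis by (intro bexI[OF _ B(1)] conjI)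
qed

lemma inst_domD:
  assumes "(v, x, y) \<in> inst_dom n m Vs Xs Ys"
  shows "v \<in> bid_profiles n m Vs" "x \<in> ctx_vectors n Xs" "y \<in> ctx_vectors m Ys"
    "\<And>i. i < n \<Longrightarrow> (\<Sum>j<m. v i j) \<le> 1"
  using assms by (auto simp: inst_dom_def valuation_profiles_def)

lemma bid_profiles_upd_row:
  assumes "v \<in> bid_profiles n m Vs" "i < n" "b \<in> bid_rows m Vs"
  shows "v(i := b) \<in> bid_profiles n m Vs"
  using assms by (auto simp: bid_profiles_def bid_rows_def)

lemma bid_profiles_row:
  assumes "v \<in> bid_profiles n m Vs" "i < n"
  shows "v i \<in> bid_rows m Vs"
  using assms by (auto simp: bid_profiles_def bid_rows_def)

lemma allocated_value_le_one:
  assumes F: "feasible_mech n m Vs Xs Ys g p" and Vs: "Vs \<subseteq> {0..}"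
    and z: "(v, x, y) \<in> inst_dom n m Vs Xs Ys" and i: "i < n" and b: "b \<in> bid_profiles n m Vs"
  shows "(\<Sum>j<m. g b x y i j * v i j) \<le> 1"
proof -
  note z' = inst_domD[OF z]
  have "g b x y i j * v i j \<le> v i j" if "j < m" for j
  proof -
    have "0 \<le> v i j" using z'(1) Vs i that by (auto simp: bid_profiles_def)
    moreover have "0 \<le> g b x y i j \<and> g b x y i j \<le> 1"
      using F z'(2,3) b i that by (auto simp: feasible_mech_def)
    ultimately show ?thesis by (simp add: mult_left_le_one_le)
  qed
  then have "(\<Sum>j<m. g b x y i j * v i j) \<le> (\<Sum>j<m. v i j)" by (intro sum_mono) simp
  with z'(4)[OF i] show ?thesis by linarith
qed

lemma payment_bounds:
  assumes F: "feasible_mech n m Vs Xs Ys g p" and Vs: "Vs \<subseteq> {0..}"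
    and z: "(v, x, y) \<in> inst_dom n m Vs Xs Ys" and i: "i < n"
  shows "0 \<le> p v x y i \<and> p v x y i \<le> 1"
  using F inst_domD[OF z] allocated_value_le_one[OF F Vs z i] i
  unfolding feasible_mech_def by (meson order_trans)

lemma utility_le_one:
  assumes F: "feasible_mech n m Vs Xs Ys g p" and Vs: "Vs \<subseteq> {0..}"
    and z: "(v, x, y) \<in> inst_dom n m Vs Xs Ys" and i: "i < n" and b: "b \<in> bid_profiles n m Vs"
  shows "utility m g p i (v i) b x y \<le> 1"
  using F inst_domD[OF z] allocated_value_le_one[OF F Vs z i b] i b
  unfolding feasible_mech_def utility_def by force

lemma truthful_utility_nonneg:
  assumes F: "feasible_mech n m Vs Xs Ys g p"
    and z: "(v, x, y) \<in> inst_dom n m Vs Xs Ys" and i: "i < n"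
  shows "0 \<le> utility m g p i (v i) v x y"
  using F inst_domD[OF z] i unfolding feasible_mech_def utility_def by force

lemma regret_eq_best_response:
  assumes b: "b \<in> bid_rows m Vs"
    and best: "\<forall>b'\<in>bid_rows m Vs. utility m g p i (v i) (v(i := b')) x y \<le> utility m g p i (v i) (v(i := b)) x y"
  shows "regret m Vs g p i v x y = utility m g p i (v i) (v(i := b)) x y - utility m g p i (v i) v x y"
  unfolding regret_def using b best by (subst cSup_eq_maximum) auto

lemma regret_bounds:
  assumes F: "feasible_mech n m Vs Xs Ys g p" and Vs: "Vs \<subseteq> {0..}"
    and z: "(v, x, y) \<in> inst_dom n m Vs Xs Ys" and i: "i < n"
    and best: "\<exists>b\<in>bid_rows m Vs. \<forall>b'\<in>bid_rows m Vs.
      utility m g p i (v i) (v(i := b')) x y \<le> utility m g p i (v i) (v(i := b)) x y"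
  shows "0 \<le> regret m Vs g p i v x y \<and> regret m Vs g p i v x y \<le> 1"
proof -
  obtain b where b: "b \<in> bid_rows m Vs" and best_b: "\<forall>b'\<in>bid_rows m Vs.
      utility m g p i (v i) (v(i := b')) x y \<le> utility m g p i (v i) (v(i := b)) x y"
    using best by blast
  note z' = inst_domD[OF z]
  have "utility m g p i (v i) (v(i := v i)) x y \<le> utility m g p i (v i) (v(i := b)) x y"
    using best_b bid_profiles_row[OF z'(1) i] by blast
  moreover have "utility m g p i (v i) (v(i := b)) x y \<le> 1"
    by (rule utility_le_one[OF F Vs z i bid_profiles_upd_row[OF z'(1) i b]])
  ultimately show ?thesis
    using regret_eq_best_response[OF b best_b] truthful_utility_nonneg[OF F z i] by simp
qed

lemma sum_in_range_of_bounded_terms: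
  fixes a :: "nat \<Rightarrow> real"
  assumes "\<And>i. i < n \<Longrightarrow> 0 \<le> a i \<and> a i \<le> 1"
  shows "(\<Sum>i<n. a i) \<in> {0..real n}"
  using assms sum_nonneg[of "{..<n}" a] sum_bounded_above[of "{..<n}" a 1] by auto

lemma payment_sum_bounds:
  assumes F: "feasible_mech n m Vs Xs Ys g p" and Vs: "Vs \<subseteq> {0..}"
    and z: "(v, x, y) \<in> inst_dom n m Vs Xs Ys"
  shows "(\<Sum>i<n. p v x y i) \<in> {0..real n}"
  by (intro sum_in_range_of_bounded_terms payment_bounds[OF F Vs z])

lemma regret_sum_bounds:
  assumes F: "feasible_mech n m Vs Xs Ys g p" and Vs: "Vs \<subseteq> {0..}"
    and z: "(v, x, y) \<in> inst_dom n m Vs Xs Ys"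
    and best: "\<forall>i<n. \<exists>b\<in>bid_rows m Vs. \<forall>b'\<in>bid_rows m Vs.
      utility m g p i (v i) (v(i := b')) x y \<le> utility m g p i (v i) (v(i := b)) x y"
  shows "(\<Sum>i<n. regret m Vs g p i v x y) \<in> {0..real n}"
proof (rule sum_in_range_of_bounded_terms)
  fix i assume "i < n"
  with best show "0 \<le> regret m Vs g p i v x y \<and> regret m Vs g p i v x y \<le> 1"
    by (intro regret_bounds[OF F Vs z]) auto
qed

lemma abs_sum_diff_le_linf1_pay:
  assumes d: "linf1_pay n m Vs Xs Ys p p' < ereal r" and z: "(v, x, y) \<in> inst_dom n m Vs Xs Ys"
  shows "\<bar>(\<Sum>i<n. p v x y i) - (\<Sum>i<n. p' v x y i)\<bar> \<le> r"
proof -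
  have "ereal (\<Sum>i<n. \<bar>p v x y i - p' v x y i\<bar>) \<le> linf1_pay n m Vs Xs Ys p p'"
    unfolding linf1_pay_def using z by (intro SUP_upper2[of "(v, x, y)"]) auto
  from le_less_trans[OF this d] have "(\<Sum>i<n. \<bar>p v x y i - p' v x y i\<bar>) \<le> r" by simp
  then show ?thesis by (metis sum_abs sum_subtractf order_trans)
qed

lemma sum_abs_utility_diff_le_linf1_util:
  assumes d: "linf1_util n m Vs Xs Ys u u' < ereal r" and z: "(v, x, y) \<in> inst_dom n m Vs Xs Ys"
    and w: "w \<in> bid_profiles n m Vs"
  shows "(\<Sum>i<n. \<bar>u i (v i) (v(i := w i)) x y - u' i (v i) (v(i := w i)) x y\<bar>) \<le> r"
proof -
  have "ereal (\<Sum>i<n. \<bar>u i (v i) (v(i := w i)) x y - u' i (v i) (v(i := w i)) x y\<bar>)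
      \<le> linf1_util n m Vs Xs Ys u u'"
    unfolding linf1_util_def using z w by (intro SUP_upper2[of "((v, x, y), w)"]) auto
  from le_less_trans[OF this d] show ?thesis by simp
qed

lemma abs_diff_of_maxima_le:
  fixes f g :: "'b \<Rightarrow> real"
  assumes "b1 \<in> B" "b2 \<in> B" "\<forall>b\<in>B. f b \<le> f b1" "\<forall>b\<in>B. g b \<le> g b2"
  shows "\<bar>f b1 - g b2\<bar> \<le> max \<bar>f b1 - g b1\<bar> \<bar>f b2 - g b2\<bar>"
  using assms by (auto simp: abs_le_iff)

lemma abs_sum_regret_diff_le_linf1_util:
  assumes z: "(v, x, y) \<in> inst_dom n m Vs Xs Ys"
    and best1: "\<forall>i<n. \<exists>b\<in>bid_rows m Vs. \<forall>b'\<in>bid_rows m Vs.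
        utility m g1 p1 i (v i) (v(i := b')) x y \<le> utility m g1 p1 i (v i) (v(i := b)) x y"
    and best2: "\<forall>i<n. \<exists>b\<in>bid_rows m Vs. \<forall>b'\<in>bid_rows m Vs.
        utility m g2 p2 i (v i) (v(i := b')) x y \<le> utility m g2 p2 i (v i) (v(i := b)) x y"
    and d: "linf1_util n m Vs Xs Ys (utility m g1 p1) (utility m g2 p2) < ereal r"
  shows "\<bar>(\<Sum>i<n. regret m Vs g1 p1 i v x y) - (\<Sum>i<n. regret m Vs g2 p2 i v x y)\<bar> \<le> 2 * r"
proof -
  define U1 where "U1 i b = utility m g1 p1 i (v i) (v(i := b)) x y" for i b
  define U2 where "U2 i b = utility m g2 p2 i (v i) (v(i := b)) x y" for i b
  obtain B1 where B1: "\<And>i. i < n \<Longrightarrow> B1 i \<in> bid_rows m Vs \<and> (\<forall>b\<in>bid_rows m Vs. U1 i b \<le> U1 i (B1 i))"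
    using best1 unfolding U1_def by metis
  obtain B2 where B2: "\<And>i. i < n \<Longrightarrow> B2 i \<in> bid_rows m Vs \<and> (\<forall>b\<in>bid_rows m Vs. U2 i b \<le> U2 i (B2 i))"
    using best2 unfolding U2_def by metis
  \<comment> \<open>the deviation on which the two utilities differ the most: it realises the difference of the maxima\<close>
  define W where "W i = (if i < n then if \<bar>U1 i (B1 i) - U2 i (B1 i)\<bar> \<le> \<bar>U1 i (B2 i) - U2 i (B2 i)\<bar>
      then B2 i else B1 i else (\<lambda>_. 0))" for i
  have W: "W \<in> bid_profiles n m Vs"
    using B1 B2 by (auto simp: W_def bid_profiles_def bid_rows_def)
  have "\<bar>regret m Vs g1 p1 i v x y - regret m Vs g2 p2 i v x y\<bar>
      \<le> \<bar>U1 i (W i) - U2 i (W i)\<bar> + \<bar>U1 i (v i) - U2 i (v i)\<bar>" if i: "i < n" for i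
  proof -
    have "regret m Vs g1 p1 i v x y = U1 i (B1 i) - U1 i (v i)"
      using regret_eq_best_response[of "B1 i" m Vs g1 p1 i v x y] B1[OF i] by (simp add: U1_def)
    moreover have "regret m Vs g2 p2 i v x y = U2 i (B2 i) - U2 i (v i)"
      using regret_eq_best_response[of "B2 i" m Vs g2 p2 i v x y] B2[OF i] by (simp add: U2_def)
    moreover have "\<bar>U1 i (B1 i) - U2 i (B2 i)\<bar> \<le> max \<bar>U1 i (B1 i) - U2 i (B1 i)\<bar> \<bar>U1 i (B2 i) - U2 i (B2 i)\<bar>"
      using B1[OF i] B2[OF i] by (intro abs_diff_of_maxima_le[where B="bid_rows m Vs"]) blast+
    moreover have "max \<bar>U1 i (B1 i) - U2 i (B1 i)\<bar> \<bar>U1 i (B2 i) - U2 i (B2 i)\<bar> = \<bar>U1 i (W i) - U2 i (W i)\<bar>"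
      by (simp add: W_def max_def i)
    ultimately show ?thesis by linarith
  qed
  then have "(\<Sum>i<n. \<bar>regret m Vs g1 p1 i v x y - regret m Vs g2 p2 i v x y\<bar>)
      \<le> (\<Sum>i<n. \<bar>U1 i (W i) - U2 i (W i)\<bar>) + (\<Sum>i<n. \<bar>U1 i (v i) - U2 i (v i)\<bar>)"
    unfolding sum.distrib[symmetric] by (intro sum_mono) simp
  then have "\<bar>(\<Sum>i<n. regret m Vs g1 p1 i v x y) - (\<Sum>i<n. regret m Vs g2 p2 i v x y)\<bar>
      \<le> (\<Sum>i<n. \<bar>U1 i (W i) - U2 i (W i)\<bar>) + (\<Sum>i<n. \<bar>U1 i (v i) - U2 i (v i)\<bar>)"
    unfolding sum_subtractf[symmetric] by (rule order_trans[OF sum_abs])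
  also have "\<dots> \<le> r + r"
    using sum_abs_utility_diff_le_linf1_util[OF d z W] sum_abs_utility_diff_le_linf1_util[OF d z inst_domD(1)[OF z]]
    by (intro add_mono) (simp_all add: U1_def U2_def)
  finally show ?thesis by simp
qed

lemma revenue_sample_means_uniformly_close:
  fixes P :: "'w \<Rightarrow> ('a,'b) pay"
    and D :: "((nat \<Rightarrow> nat \<Rightarrow> real) \<times> (nat \<Rightarrow> 'a) \<times> (nat \<Rightarrow> 'b)) measure"
  assumes Vs_nonneg: "Vs \<subseteq> {0..}"
    and feas: "\<forall>\<omega>\<in>Om. feasible_mech n m Vs Xs Ys (G \<omega>) (P \<omega>)"
    and D_prob: "prob_space D" and D_supp: "AE z in D. z \<in> inst_dom n m Vs Xs Ys"
    and meas_pay: "\<forall>\<omega>\<in>Om. (\<lambda>(v,x,y). \<Sum>i<n. P \<omega> v x y i) \<in> borel_measurable D"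
    and cov_P: "finitely_coverable (linf1_pay n m Vs Xs Ys) (P ` Om) (\<epsilon>/3)"
    and eps_pos: "\<epsilon> > 0" and delta: "0 < \<delta>" "\<delta> < 1"
    and M: "ln (real (covering_number (linf1_pay n m Vs Xs Ys) (P ` Om) (\<epsilon>/3))) \<le> M"
    and L_bound: "real L \<ge> 9 * real n ^ 2 / (2 * \<epsilon> ^ 2) * (ln (4 / \<delta>) + M)"
  shows "\<exists>B \<in> sets (PiM {..<L} (\<lambda>_. D)). measure (PiM {..<L} (\<lambda>_. D)) B \<le> \<delta> / 2 \<and>
           (\<forall>S \<in> space (PiM {..<L} (\<lambda>_. D)) - B. \<forall>\<omega>\<in>Om.
              \<bar>(\<integral>z. (case z of (v,x,y) \<Rightarrow> \<Sum>i<n. P \<omega> v x y i) \<partial>D)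
                - (1 / real L) * (\<Sum>l<L. case S l of (v,x,y) \<Rightarrow> \<Sum>i<n. P \<omega> v x y i)\<bar> \<le> \<epsilon>)"
proof (cases "n = 0 \<or> Om = {}")
  case True
  then show ?thesis using eps_pos delta by (intro bexI[of _ "{}"]) (auto simp: split_beta)
next
  case False
  then have n: "real n > 0" and Om: "Om \<noteq> {}" by auto
  let ?Dom = "inst_dom n m Vs Xs Ys"
  define pay where "pay \<omega> = (\<lambda>(v, x, y). \<Sum>i<n. P \<omega> v x y i)" for \<omega>
  have pay_meas: "pay \<omega> \<in> borel_measurable D" if "\<omega> \<in> Om" for \<omega>
    using meas_pay that by (simp add: pay_def)
  have pay_bound: "pay \<omega> z \<in> {0..real n}" if "\<omega> \<in> Om" "z \<in> ?Dom" for \<omega> z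
    using that payment_sum_bounds[OF feas[rule_format, OF that(1)] Vs_nonneg]
    by (cases z) (simp add: pay_def)
  have pay_lipschitz: "\<bar>pay \<omega> z - pay \<omega>' z\<bar> \<le> \<epsilon>/3"
    if "linf1_pay n m Vs Xs Ys (P \<omega>) (P \<omega>') < ereal (\<epsilon>/3)" "z \<in> ?Dom" for \<omega> \<omega>' z
    using that abs_sum_diff_le_linf1_pay[OF that(1)] by (cases z) (simp add: pay_def)
  have "real L \<ge> (real n)\<^sup>2 / (2 * (\<epsilon>/3)\<^sup>2) * (ln (4 / \<delta>) + M)"
    using L_bound by (simp add: power_divide)
  moreover have eps3: "\<epsilon>/3 > 0" using eps_pos by simp
  ultimately obtain B where B: "B \<in> sets (PiM {..<L} (\<lambda>_. D))" "measure (PiM {..<L} (\<lambda>_. D)) B \<le> \<delta> / 2"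
      "\<forall>S \<in> space (PiM {..<L} (\<lambda>_. D)) - B. \<forall>\<omega>\<in>Om.
         \<bar>(\<integral>z. pay \<omega> z \<partial>D) - (\<Sum>l<L. pay \<omega> (S l)) / real L\<bar> \<le> 2 * (\<epsilon>/3) + \<epsilon>/3"
    using sample_means_uniformly_close_via_covering[where h=pay and Om=Om and Dom="?Dom",
      OF D_prob D_supp pay_meas pay_bound cov_P pay_lipschitz Om n eps3 delta M] by blast
  have "2 * (\<epsilon>/3) + \<epsilon>/3 = \<epsilon>" by linarith
  with B show ?thesis by (intro bexI[OF _ B(1)]) (simp add: pay_def)
qed

lemma regret_sample_means_uniformly_close:
  fixes G :: "'w \<Rightarrow> ('a,'b) alloc" and P :: "'w \<Rightarrow> ('a,'b) pay"
    and D :: "((nat \<Rightarrow> nat \<Rightarrow> real) \<times> (nat \<Rightarrow> 'a) \<times> (nat \<Rightarrow> 'b)) measure"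
  assumes Vs_nonneg: "Vs \<subseteq> {0..}"
    and feas: "\<forall>\<omega>\<in>Om. feasible_mech n m Vs Xs Ys (G \<omega>) (P \<omega>)"
    and D_prob: "prob_space D" and D_supp: "AE z in D. z \<in> inst_dom n m Vs Xs Ys"
    and max_attained: "\<forall>\<omega>\<in>Om. \<forall>(v,x,y)\<in>inst_dom n m Vs Xs Ys. \<forall>i<n.
          \<exists>b\<in>bid_rows m Vs. \<forall>b'\<in>bid_rows m Vs.
            utility m (G \<omega>) (P \<omega>) i (v i) (v(i := b')) x y \<le> utility m (G \<omega>) (P \<omega>) i (v i) (v(i := b)) x y"
    and meas_reg: "\<forall>\<omega>\<in>Om. (\<lambda>(v,x,y). \<Sum>i<n. regret m Vs (G \<omega>) (P \<omega>) i v x y) \<in> borel_measurable D"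
    and cov_U: "finitely_coverable (linf1_util n m Vs Xs Ys) ((\<lambda>\<omega>. utility m (G \<omega>) (P \<omega>)) ` Om) (\<epsilon>/6)"
    and eps_pos: "\<epsilon> > 0" and delta: "0 < \<delta>" "\<delta> < 1"
    and M: "ln (real (covering_number (linf1_util n m Vs Xs Ys)
              ((\<lambda>\<omega>. utility m (G \<omega>) (P \<omega>)) ` Om) (\<epsilon>/6))) \<le> M"
    and L_bound: "real L \<ge> 9 * real n ^ 2 / (2 * \<epsilon> ^ 2) * (ln (4 / \<delta>) + M)"
  shows "\<exists>B \<in> sets (PiM {..<L} (\<lambda>_. D)). measure (PiM {..<L} (\<lambda>_. D)) B \<le> \<delta> / 2 \<and>
           (\<forall>S \<in> space (PiM {..<L} (\<lambda>_. D)) - B. \<forall>\<omega>\<in>Om.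
              \<bar>(\<integral>z. (case z of (v,x,y) \<Rightarrow> \<Sum>i<n. regret m Vs (G \<omega>) (P \<omega>) i v x y) \<partial>D)
                - (\<Sum>i<n. (1 / real L) * (\<Sum>l<L. case S l of (v,x,y) \<Rightarrow> regret m Vs (G \<omega>) (P \<omega>) i v x y))\<bar>
              \<le> \<epsilon>)"
proof (cases "n = 0 \<or> Om = {}")
  case True
  then show ?thesis using eps_pos delta by (intro bexI[of _ "{}"]) (auto simp: split_beta)
next
  case False
  then have n: "real n > 0" and Om: "Om \<noteq> {}" by auto
  let ?Dom = "inst_dom n m Vs Xs Ys"
  define reg where "reg \<omega> = (\<lambda>(v, x, y). \<Sum>i<n. regret m Vs (G \<omega>) (P \<omega>) i v x y)" for \<omega>
  have best: "\<forall>i<n. \<exists>b\<in>bid_rows m Vs. \<forall>b'\<in>bid_rows m Vs.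
      utility m (G \<omega>) (P \<omega>) i (v i) (v(i := b')) x y \<le> utility m (G \<omega>) (P \<omega>) i (v i) (v(i := b)) x y"
    if "\<omega> \<in> Om" "(v, x, y) \<in> ?Dom" for \<omega> v x y
    using bspec[OF bspec[OF max_attained that(1)] that(2)] by simp
  have reg_meas: "reg \<omega> \<in> borel_measurable D" if "\<omega> \<in> Om" for \<omega>
    using meas_reg that by (simp add: reg_def)
  have reg_bound: "reg \<omega> z \<in> {0..real n}" if "\<omega> \<in> Om" "z \<in> ?Dom" for \<omega> z
    using that regret_sum_bounds[OF feas[rule_format, OF that(1)] Vs_nonneg _ best[OF that(1)]]
    by (cases z) (simp add: reg_def)
  have reg_lipschitz: "\<bar>reg \<omega> z - reg \<omega>' z\<bar> \<le> 2 * (\<epsilon>/6)"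
    if "\<omega> \<in> Om" "\<omega>' \<in> Om"
      "linf1_util n m Vs Xs Ys (utility m (G \<omega>) (P \<omega>)) (utility m (G \<omega>') (P \<omega>')) < ereal (\<epsilon>/6)"
      "z \<in> ?Dom"
    for \<omega> \<omega>' z
    using that abs_sum_regret_diff_le_linf1_util[OF _ best[OF that(1)] best[OF that(2)] that(3)]
    by (cases z) (simp add: reg_def)
  have "real L \<ge> (real n)\<^sup>2 / (2 * (\<epsilon>/3)\<^sup>2) * (ln (4 / \<delta>) + M)"
    using L_bound by (simp add: power_divide)
  moreover have eps3: "\<epsilon>/3 > 0" using eps_pos by simp
  ultimately obtain B where B: "B \<in> sets (PiM {..<L} (\<lambda>_. D))" "measure (PiM {..<L} (\<lambda>_. D)) B \<le> \<delta> / 2"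
      "\<forall>S \<in> space (PiM {..<L} (\<lambda>_. D)) - B. \<forall>\<omega>\<in>Om.
         \<bar>(\<integral>z. reg \<omega> z \<partial>D) - (\<Sum>l<L. reg \<omega> (S l)) / real L\<bar> \<le> 2 * (2 * (\<epsilon>/6)) + \<epsilon>/3"
    using sample_means_uniformly_close_via_covering[where h=reg and Om=Om and Dom="?Dom",
      OF D_prob D_supp reg_meas reg_bound cov_U reg_lipschitz Om n eps3 delta M] by blast
  have "2 * (2 * (\<epsilon>/6)) + \<epsilon>/3 = \<epsilon>" by linarith
  moreover have "(\<Sum>i<n. (1 / real L) * (\<Sum>l<L. case S l of (v,x,y) \<Rightarrow> regret m Vs (G \<omega>) (P \<omega>) i v x y))
      = (\<Sum>l<L. reg \<omega> (S l)) / real L" for S \<omega>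
    by (simp add: reg_def split_beta sum_divide_distrib[symmetric] sum.swap[of _ "{..<n}"])
  ultimately show ?thesis using B by (intro bexI[OF _ B(1)]) (simp add: reg_def)
qed

theorem corollary1:
  fixes n m L :: nat
    and Vs :: "real set" and Xs :: "'a set" and Ys :: "'b set"
    and Om :: "'w set"
    and G :: "'w \<Rightarrow> ('a,'b) alloc" and P :: "'w \<Rightarrow> ('a,'b) pay"
    and D :: "((nat \<Rightarrow> nat \<Rightarrow> real) \<times> (nat \<Rightarrow> 'a) \<times> (nat \<Rightarrow> 'b)) measure"
    and \<epsilon> \<delta> :: real
  assumes Vs_nonneg: "Vs \<subseteq> {0..}"
    and feas: "\<forall>\<omega>\<in>Om. feasible_mech n m Vs Xs Ys (G \<omega>) (P \<omega>)"
    and D_prob: "prob_space D"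
    and D_supp: "AE z in D. z \<in> inst_dom n m Vs Xs Ys"
    and max_attained: "\<forall>\<omega>\<in>Om. \<forall>(v,x,y)\<in>inst_dom n m Vs Xs Ys. \<forall>i<n.
          \<exists>b\<in>bid_rows m Vs. \<forall>b'\<in>bid_rows m Vs.
            utility m (G \<omega>) (P \<omega>) i (v i) (v(i := b')) x y \<le> utility m (G \<omega>) (P \<omega>) i (v i) (v(i := b)) x y"
    and meas_pay: "\<forall>\<omega>\<in>Om. (\<lambda>(v,x,y). \<Sum>i<n. P \<omega> v x y i) \<in> borel_measurable D"
    and meas_reg: "\<forall>\<omega>\<in>Om. (\<lambda>(v,x,y). \<Sum>i<n. regret m Vs (G \<omega>) (P \<omega>) i v x y) \<in> borel_measurable D"
    and cov_P: "finitely_coverable (linf1_pay n m Vs Xs Ys) (P ` Om) (\<epsilon>/3)"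
    and cov_U: "finitely_coverable (linf1_util n m Vs Xs Ys) ((\<lambda>\<omega>. utility m (G \<omega>) (P \<omega>)) ` Om) (\<epsilon>/6)"
    and eps_pos: "\<epsilon> > 0"
    and delta: "0 < \<delta>" "\<delta> < 1"
    and L_bound: "real L \<ge> 9 * real n ^ 2 / (2 * \<epsilon> ^ 2) *
        (ln (4 / \<delta>) + max (ln (real (covering_number (linf1_pay n m Vs Xs Ys) (P ` Om) (\<epsilon>/3))))
                             (ln (real (covering_number (linf1_util n m Vs Xs Ys)
                                        ((\<lambda>\<omega>. utility m (G \<omega>) (P \<omega>)) ` Om) (\<epsilon>/6)))))"
  shows "\<exists>A \<in> sets (PiM {..<L} (\<lambda>_. D)).
           measure (PiM {..<L} (\<lambda>_. D)) A \<ge> 1 - \<delta> \<and>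
           (\<forall>S\<in>A. \<forall>\<omega>\<in>Om.
              \<bar>(\<integral>z. (case z of (v,x,y) \<Rightarrow> \<Sum>i<n. P \<omega> v x y i) \<partial>D)
                - (1 / real L) * (\<Sum>l<L. case S l of (v,x,y) \<Rightarrow> \<Sum>i<n. P \<omega> v x y i)\<bar> \<le> \<epsilon> \<and>
              \<bar>(\<integral>z. (case z of (v,x,y) \<Rightarrow> \<Sum>i<n. regret m Vs (G \<omega>) (P \<omega>) i v x y) \<partial>D)
                - (\<Sum>i<n. (1 / real L) * (\<Sum>l<L. case S l of (v,x,y) \<Rightarrow> regret m Vs (G \<omega>) (P \<omega>) i v x y))\<bar> \<le> \<epsilon>)"
proof -
  let ?Q = "PiM {..<L} (\<lambda>_. D)"
  from revenue_sample_means_uniformly_close[OF Vs_nonneg feas D_prob D_supp meas_pay cov_P eps_pos delta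
      max.cobounded1 L_bound]
  obtain BP where BP: "BP \<in> sets ?Q" "measure ?Q BP \<le> \<delta> / 2" "\<forall>S \<in> space ?Q - BP. \<forall>\<omega>\<in>Om.
      \<bar>(\<integral>z. (case z of (v,x,y) \<Rightarrow> \<Sum>i<n. P \<omega> v x y i) \<partial>D)
        - (1 / real L) * (\<Sum>l<L. case S l of (v,x,y) \<Rightarrow> \<Sum>i<n. P \<omega> v x y i)\<bar> \<le> \<epsilon>"
    by blast
  from regret_sample_means_uniformly_close[OF Vs_nonneg feas D_prob D_supp max_attained meas_reg cov_U
      eps_pos delta max.cobounded2 L_bound]
  obtain BU where BU: "BU \<in> sets ?Q" "measure ?Q BU \<le> \<delta> / 2" "\<forall>S \<in> space ?Q - BU. \<forall>\<omega>\<in>Om.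
      \<bar>(\<integral>z. (case z of (v,x,y) \<Rightarrow> \<Sum>i<n. regret m Vs (G \<omega>) (P \<omega>) i v x y) \<partial>D)
        - (\<Sum>i<n. (1 / real L) * (\<Sum>l<L. case S l of (v,x,y) \<Rightarrow> regret m Vs (G \<omega>) (P \<omega>) i v x y))\<bar> \<le> \<epsilon>"
    by blast
  interpret Q: prob_space ?Q by (rule prob_space_PiM) (rule D_prob)
  have "measure ?Q (space ?Q - (BP \<union> BU)) \<ge> 1 - \<delta>"
    using Q.prob_compl[of "BP \<union> BU"] measure_Un_le[OF BP(1) BU(1)] BP(1,2) BU(1,2) by auto
  then show ?thesis
    using BP BU by (intro bexI[of _ "space ?Q - (BP \<union> BU)"]) auto
qed

end
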